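(* For every odd $r\ge1$, the tuple $(p_{r,n}1_n)_{n\ge0}$, where $p_{r,n}=\sum_{i=1}^nx_i^r$ is the $r$th power sum, lies in the center $Z(\mathcal{NB}_t)$.
   Context: Let $\Bbbk$ be a field of characteristic $\neq2$, $t\in\{0,1\}$, and let $\mathcal{NB}_t$ be the nil-Brauer category: the strict graded $\Bbbk$-linear monoidal category (tensor $\star$, unit $\mathbb1$, composition $\circ$) generated by an object $B$ and morphisms $x:B\to B$ (degree 2), $\tau:B\star B\to B\star B$ (degree $-2$), $\cap:B\star B\to\mathbb1$, $\cup:\mathbb1\to B\star B$ (degree 0), with relations ($1=1_B$): $\tau\circ\tau=0$; $(\tau\star1)\circ(1\star\tau)\circ(\tau\star1)=(1\star\tau)\circ(\tau\star1)\circ(1\star\tau)$; $\cap\circ\cup=t1_{\mathbb1}$; $(\cap\star1)\circ(1\star\cup)=1=(1\star\cap)\circ(\cup\star1)$; $\cap\circ\tau=0$; $(1\star\cap)\circ(\tau\star1)=(\cap\star1)\circ(1\star\tau)$; $(x\star1)\circ\tau-\tau\circ(1\star x)=1\star1-\cup\circ\cap$; $\cap\circ(1\star x)=-\cap\circ(x\star1)$. For $g\in\Bbbk[x_1,\dots,x_n]$, $g1_n$ is the endomorphism of $B^{\star n}$ obtained by substituting $x_i\mapsto1^{\star(i-1)}\star x\star1^{\star(n-i)}$. The center $Z(\mathcal{NB}_t)$ consists of tuples $(z_n)_{n\ge0}$, $z_n\in\mathrm{End}(B^{\star n})$, with $z_m\circ f=f\circ z_n$ for all $f:B^{\star n}\to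 B^{\star m}$. *)

theory Defs
  imports Main
begin

text \<open>Formal morphism expressions of the nil-Brauer category. The object
  B^{\<star>n} is represented by the natural number n.\<close>

datatype 'k nbmor =
    Id nat
  | Zr nat nat
  | Xg | Taug | Capg | Cupg
  | Comp "'k nbmor" "'k nbmor"     \<comment> \<open>Comp f g = f \<circ> g\<close>
  | Tens "'k nbmor" "'k nbmor"
  | Add "'k nbmor" "'k nbmor"
  | Smul 'k "'k nbmor"

inductive hom :: "'k nbmor \<Rightarrow> nat \<Rightarrow> nat \<Rightarrow> bool" where
  hom_Id: "hom (Id n) n n"
| hom_Zr: "hom (Zr n m) n m"
| hom_X: "hom Xg 1 1"
| hom_Tau: "hom Taug 2 2"
| hom_Cap: "hom Capg 2 0"
| hom_Cup: "hom Cupg 0 2"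
| hom_Comp: "hom f n m \<Longrightarrow> hom g k n \<Longrightarrow> hom (Comp f g) k m"
| hom_Tens: "hom f n m \<Longrightarrow> hom g n' m' \<Longrightarrow> hom (Tens f g) (n + n') (m + m')"
| hom_Add: "hom f n m \<Longrightarrow> hom g n m \<Longrightarrow> hom (Add f g) n m"
| hom_Smul: "hom f n m \<Longrightarrow> hom (Smul c f) n m"

text \<open>Equality of morphisms in NB_t: the congruence generated by the axioms of a
  strict k-linear monoidal category together with the defining relations.\<close>
inductive eqv :: "'k::field \<Rightarrow> 'k nbmor \<Rightarrow> 'k nbmor \<Rightarrow> bool" for t :: 'k where
  refl: "hom f n m \<Longrightarrow> eqv t f f"
| sym: "eqv t f g \<Longrightarrow> eqv t g f"
| trans: "eqv t f g \<Longrightarrow> eqv t g h \<Longrightarrow> eqv t f h"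
| cong_Comp: "eqv t f f' \<Longrightarrow> eqv t g g' \<Longrightarrow> hom f n m \<Longrightarrow> hom g k n \<Longrightarrow>
     eqv t (Comp f g) (Comp f' g')"
| cong_Tens: "eqv t f f' \<Longrightarrow> eqv t g g' \<Longrightarrow> eqv t (Tens f g) (Tens f' g')"
| cong_Add: "eqv t f f' \<Longrightarrow> eqv t g g' \<Longrightarrow> hom f n m \<Longrightarrow> hom g n m \<Longrightarrow>
     eqv t (Add f g) (Add f' g')"
| cong_Smul: "eqv t f f' \<Longrightarrow> eqv t (Smul c f) (Smul c f')"
| comp_id_l: "hom f n m \<Longrightarrow> eqv t (Comp (Id m) f) f"
| comp_id_r: "hom f n m \<Longrightarrow> eqv t (Comp f (Id n)) f"
| comp_assoc: "hom f n m \<Longrightarrow> hom g k n \<Longrightarrow> hom h j k \<Longrightarrow>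
     eqv t (Comp (Comp f g) h) (Comp f (Comp g h))"
| tens_assoc: "hom f n m \<Longrightarrow> hom g n' m' \<Longrightarrow> hom h n'' m'' \<Longrightarrow>
     eqv t (Tens (Tens f g) h) (Tens f (Tens g h))"
| tens_unit_l: "hom f n m \<Longrightarrow> eqv t (Tens (Id 0) f) f"
| tens_unit_r: "hom f n m \<Longrightarrow> eqv t (Tens f (Id 0)) f"
| tens_id: "eqv t (Tens (Id m) (Id n)) (Id (m + n))"
| interchange: "hom f n m \<Longrightarrow> hom f' k n \<Longrightarrow> hom g n2 m2 \<Longrightarrow> hom g' k2 n2 \<Longrightarrow>
     eqv t (Comp (Tens f g) (Tens f' g')) (Tens (Comp f f') (Comp g g'))"
| add_assoc: "hom f n m \<Longrightarrow> hom g n m \<Longrightarrow> hom h n m \<Longrightarrow>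
     eqv t (Add (Add f g) h) (Add f (Add g h))"
| add_comm: "hom f n m \<Longrightarrow> hom g n m \<Longrightarrow> eqv t (Add f g) (Add g f)"
| add_zero: "hom f n m \<Longrightarrow> eqv t (Add f (Zr n m)) f"
| add_inv: "hom f n m \<Longrightarrow> eqv t (Add f (Smul (-1) f)) (Zr n m)"
| smul_one: "hom f n m \<Longrightarrow> eqv t (Smul 1 f) f"
| smul_smul: "hom f n m \<Longrightarrow> eqv t (Smul a (Smul b f)) (Smul (a * b) f)"
| smul_add_scalar: "hom f n m \<Longrightarrow> eqv t (Smul (a + b) f) (Add (Smul a f) (Smul b f))"
| smul_add: "hom f n m \<Longrightarrow> hom g n m \<Longrightarrow> eqv t (Smul a (Add f g)) (Add (Smul a f) (Smul a g))"
| comp_add_l: "hom f n m \<Longrightarrow> hom g n m \<Longrightarrow> hom h k n \<Longrightarrow>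
     eqv t (Comp (Add f g) h) (Add (Comp f h) (Comp g h))"
| comp_add_r: "hom f n m \<Longrightarrow> hom g k n \<Longrightarrow> hom h k n \<Longrightarrow>
     eqv t (Comp f (Add g h)) (Add (Comp f g) (Comp f h))"
| comp_smul_l: "hom f n m \<Longrightarrow> hom g k n \<Longrightarrow> eqv t (Comp (Smul c f) g) (Smul c (Comp f g))"
| comp_smul_r: "hom f n m \<Longrightarrow> hom g k n \<Longrightarrow> eqv t (Comp f (Smul c g)) (Smul c (Comp f g))"
| tens_add_l: "hom f n m \<Longrightarrow> hom g n m \<Longrightarrow> hom h n' m' \<Longrightarrow>
     eqv t (Tens (Add f g) h) (Add (Tens f h) (Tens g h))"
| tens_add_r: "hom f n m \<Longrightarrow> hom g n' m' \<Longrightarrow> hom h n' m' \<Longrightarrow>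
     eqv t (Tens f (Add g h)) (Add (Tens f g) (Tens f h))"
| tens_smul_l: "hom f n m \<Longrightarrow> hom g n' m' \<Longrightarrow> eqv t (Tens (Smul c f) g) (Smul c (Tens f g))"
| tens_smul_r: "hom f n m \<Longrightarrow> hom g n' m' \<Longrightarrow> eqv t (Tens f (Smul c g)) (Smul c (Tens f g))"
| rel_tau_sq: "eqv t (Comp Taug Taug) (Zr 2 2)"
| rel_braid: "eqv t (Comp (Tens Taug (Id 1)) (Comp (Tens (Id 1) Taug) (Tens Taug (Id 1))))
                    (Comp (Tens (Id 1) Taug) (Comp (Tens Taug (Id 1)) (Tens (Id 1) Taug)))"
| rel_bubble: "eqv t (Comp Capg Cupg) (Smul t (Id 0))"
| rel_zigzag1: "eqv t (Comp (Tens Capg (Id 1)) (Tens (Id 1) Cupg)) (Id 1)"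
| rel_zigzag2: "eqv t (Comp (Tens (Id 1) Capg) (Tens Cupg (Id 1))) (Id 1)"
| rel_cap_tau: "eqv t (Comp Capg Taug) (Zr 2 0)"
| rel_cap_tau_slide: "eqv t (Comp (Tens (Id 1) Capg) (Tens Taug (Id 1)))
                            (Comp (Tens Capg (Id 1)) (Tens (Id 1) Taug))"
| rel_dot_slide: "eqv t (Add (Comp (Tens Xg (Id 1)) Taug) (Smul (-1) (Comp Taug (Tens (Id 1) Xg))))
                        (Add (Tens (Id 1) (Id 1)) (Smul (-1) (Comp Cupg Capg)))"
| rel_cap_dot: "eqv t (Comp Capg (Tens (Id 1) Xg)) (Smul (-1) (Comp Capg (Tens Xg (Id 1))))"

definition xvar :: "nat \<Rightarrow> nat \<Rightarrow> 'k nbmor" where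
  "xvar n i = Tens (Id (i - 1)) (Tens Xg (Id (n - i)))"

fun cpow :: "nat \<Rightarrow> 'k nbmor \<Rightarrow> nat \<Rightarrow> 'k nbmor" where
  "cpow n f 0 = Id n"
| "cpow n f (Suc r) = Comp f (cpow n f r)"

fun psum_part :: "nat \<Rightarrow> nat \<Rightarrow> nat \<Rightarrow> 'k nbmor" where
  "psum_part r n 0 = Zr n n"
| "psum_part r n (Suc k) = Add (psum_part r n k) (cpow n (xvar n (Suc k)) r)"

definition psum :: "nat \<Rightarrow> nat \<Rightarrow> 'k nbmor" where
  "psum r n = psum_part r n n"

definition in_center :: "'k::field \<Rightarrow> (nat \<Rightarrow> 'k nbmor) \<Rightarrow> bool" where
  "in_center t z \<longleftrightarrow> (\<forall>n. hom (z n) n n) \<and>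
     (\<forall>f n m. hom f n m \<longrightarrow> eqv t (Comp (z m) f) (Comp f (z n)))"

end

theory Submission
  imports Defs
begin

text \<open>Since the power sums are additive under the tensor product,
  p_{r,m+m'} = p_{r,m} \<star> 1 + 1 \<star> p_{r,m'}, it suffices to check centrality on the generators. The cap-dot relation and its mirror image for the cup give
  cap \<circ> x_2^k = (-1)^k cap \<circ> x_1^k and x_1^k \<circ> cup = (-1)^k x_2^k \<circ> cup, so cap and cup
  kill p_{r,2} when r is odd. For \<tau> one works in the ring End(B \<star> B): with E = cup \<circ> cap,
  both x_1 \<tau> - \<tau> x_2 and \<tau> x_1 - x_2 \<tau> equal 1 - E (the second relation is the first one
  rotated by a quarter turn), and E turns x_2 into -x_1 on either side. Telescoping,
  x_1^r \<tau> - \<tau> x_2^r = \<Sum>_{i<r} x_1^i (1 - E) x_2^(r-1-i), and for odd r the corresponding sums for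
  x_1^r and x_2^r cancel.\<close>

section \<open>Odd power sums in a ring with nil-Hecke type relations\<close>

lemma power_diff_commutator:
  fixes x y t :: "'a::{ring, monoid_mult}"
  shows "x ^ k * t - t * y ^ k = (\<Sum>i<k. x ^ i * (x * t - t * y) * y ^ (k - 1 - i))"
proof (induction k)
  case 0
  then show ?case by simp
next
  case (Suc k)
  let ?d = "x * t - t * y"
  have "x ^ Suc k * t - t * y ^ Suc k = x * (x ^ k * t - t * y ^ k) + ?d * y ^ k"
    by (simp add: algebra_simps power_Suc2 mult.assoc)
  also have "x * (x ^ k * t - t * y ^ k) = (\<Sum>i<k. x ^ Suc i * ?d * y ^ (k - Suc i))"
    by (simp add: Suc sum_distrib_left mult.assoc)
  also have "\<dots> + ?d * y ^ k = (\<Sum>i<Suc k. x ^ i * ?d * y ^ (Suc k - 1 - i))"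
    by (simp only: sum.lessThan_Suc_shift) (simp add: add.commute)
  finally show ?case .
qed

lemma mult_power_anticommuting:
  fixes a b e :: "'a::{ring, monoid_mult}"
  assumes "a * b = b * a" and "e * b = - (e * a)"
  shows "e * b ^ j = (if even j then e * a ^ j else - (e * a ^ j))"
proof (induction j)
  case 0
  then show ?case by simp
next
  case (Suc j)
  have "e * b ^ Suc j = (e * b) * b ^ j" by (simp add: mult.assoc)
  also have "\<dots> = - (e * (b ^ j * a))"
    using assms(2) power_commuting_commutes[OF assms(1)[symmetric]] by (simp add: mult.assoc)
  also have "\<dots> = - ((e * b ^ j) * a)" by (simp add: mult.assoc)
  finally show ?case
    using Suc by (simp add: power_Suc2 power_commutes mult.assoc)
qed

lemma power_mult_anticommuting:
  fixes a b e :: "'a::{ring, monoid_mult}"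
  assumes "a * b = b * a" and "b * e = - (a * e)"
  shows "b ^ j * e = (if even j then a ^ j * e else - (a ^ j * e))"
proof (induction j)
  case 0
  then show ?case by simp
next
  case (Suc j)
  have "b ^ Suc j * e = b ^ j * (b * e)" by (simp only: power_Suc2 mult.assoc)
  also have "\<dots> = - ((b ^ j * a) * e)" using assms(2) by (simp add: mult.assoc)
  also have "\<dots> = - (a * (b ^ j * e))"
    by (simp only: power_commuting_commutes[OF assms(1)[symmetric]] mult.assoc)
  finally show ?case
    using Suc by (simp add: mult.assoc)
qed

lemma odd_power_sum_commutes:
  fixes x\<^sub>1 x\<^sub>2 t e :: "'a::{ring, monoid_mult}"
  assumes comm: "x\<^sub>1 * x\<^sub>2 = x\<^sub>2 * x\<^sub>1"
    and slide1: "x\<^sub>1 * t - t * x\<^sub>2 = 1 - e"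
    and slide2: "t * x\<^sub>1 - x\<^sub>2 * t = 1 - e"
    and e_right: "e * x\<^sub>2 = - (e * x\<^sub>1)"
    and e_left: "x\<^sub>2 * e = - (x\<^sub>1 * e)"
    and "odd r"
  shows "(x\<^sub>1 ^ r + x\<^sub>2 ^ r) * t = t * (x\<^sub>1 ^ r + x\<^sub>2 ^ r)"
proof -
  define m where "m = r - 1"
  have r: "r = Suc m" and "even m" using \<open>odd r\<close> by (auto simp: m_def)
  have powers_commute: "x\<^sub>2 ^ a * x\<^sub>1 ^ b = x\<^sub>1 ^ b * x\<^sub>2 ^ a" for a b
    by (rule power_commuting_commutes[OF power_commuting_commutes[OF comm, symmetric]])
  have monomials_sym: "(\<Sum>i<r. x\<^sub>1 ^ i * x\<^sub>2 ^ (m - i)) = (\<Sum>i<r. x\<^sub>2 ^ i * x\<^sub>1 ^ (m - i))"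
  proof -
    have "(\<Sum>i<r. x\<^sub>2 ^ i * x\<^sub>1 ^ (m - i)) = (\<Sum>i<r. x\<^sub>2 ^ (m - i) * x\<^sub>1 ^ (m - (m - i)))"
      using sum.nat_diff_reindex[of "\<lambda>i. x\<^sub>2 ^ i * x\<^sub>1 ^ (m - i)" r] by (simp add: r)
    also have "\<dots> = (\<Sum>i<r. x\<^sub>1 ^ i * x\<^sub>2 ^ (m - i))"
      by (rule sum.cong) (simp_all add: r less_Suc_eq_le powers_commute)
    finally show ?thesis by simp
  qed
  have e_terms_sym: "x\<^sub>1 ^ i * e * x\<^sub>2 ^ (m - i) = x\<^sub>2 ^ i * e * x\<^sub>1 ^ (m - i)" if "i < r" for i
    using mult_power_anticommuting[OF comm e_right, of "m - i"]
      power_mult_anticommuting[OF comm e_left, of i] \<open>even m\<close> that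
    by (auto simp: r mult.assoc)
  have "x\<^sub>1 ^ r * t - t * x\<^sub>2 ^ r = (\<Sum>i<r. x\<^sub>1 ^ i * (1 - e) * x\<^sub>2 ^ (m - i))"
    using power_diff_commutator[of x\<^sub>1 r t x\<^sub>2] by (simp add: slide1 r)
  moreover have "x\<^sub>2 ^ r * t - t * x\<^sub>1 ^ r = (\<Sum>i<r. x\<^sub>2 ^ i * (e - 1) * x\<^sub>1 ^ (m - i))"
  proof -
    have "x\<^sub>2 * t - t * x\<^sub>1 = e - 1" using slide2 by (simp add: algebra_simps)
    then show ?thesis using power_diff_commutator[of x\<^sub>2 r t x\<^sub>1] by (simp add: r)
  qed
  ultimately have "(x\<^sub>1 ^ r + x\<^sub>2 ^ r) * t - t * (x\<^sub>1 ^ r + x\<^sub>2 ^ r)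
      = (\<Sum>i<r. x\<^sub>1 ^ i * (1 - e) * x\<^sub>2 ^ (m - i))
        + (\<Sum>i<r. x\<^sub>2 ^ i * (e - 1) * x\<^sub>1 ^ (m - i))"
    by (simp add: algebra_simps)
  also have "\<dots> = 0"
    using monomials_sym e_terms_sym by (simp add: algebra_simps sum_subtractf)
  finally show ?thesis by simp
qed

section \<open>Morphisms of NB_t as a quotient of expressions\<close>

declare One_nat_def [simp del]

fun well_typed :: "'k nbmor \<Rightarrow> bool" and source :: "'k nbmor \<Rightarrow> nat"
  and target :: "'k nbmor \<Rightarrow> nat" where
  "well_typed (Comp f g) \<longleftrightarrow> well_typed f \<and> well_typed g \<and> source f = target g"
| "well_typed (Tens f g) \<longleftrightarrow> well_typed f \<and> well_typed g"
| "well_typed (Add f g) \<longleftrightarrow>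
     well_typed f \<and> well_typed g \<and> source f = source g \<and> target f = target g"
| "well_typed (Smul c f) \<longleftrightarrow> well_typed f"
| "well_typed _ \<longleftrightarrow> True"
| "source (Id n) = n" | "source (Zr n m) = n" | "source Xg = 1" | "source Taug = 2"
| "source Capg = 2" | "source Cupg = 0"
| "source (Comp f g) = source g" | "source (Tens f g) = source f + source g"
| "source (Add f g) = source f" | "source (Smul c f) = source f"
| "target (Id n) = n" | "target (Zr n m) = m" | "target Xg = 1" | "target Taug = 2"
| "target Capg = 0" | "target Cupg = 2"
| "target (Comp f g) = target f" | "target (Tens f g) = target f + target g"
| "target (Add f g) = target f" | "target (Smul c f) = target f"

lemma hom_iff_well_typed: "hom f n m \<longleftrightarrow> well_typed f \<and> source f = n \<and> target f = m"
proof
  show "hom f n m \<Longrightarrow> well_typed f \<and> source f = n \<and> target f = m"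
    by (induction rule: hom.induct) auto
  have "well_typed f \<Longrightarrow> hom f (source f) (target f)"
    by (induction f) (auto intro: hom.intros)
  then show "well_typed f \<and> source f = n \<and> target f = m \<Longrightarrow> hom f n m"
    by blast
qed

lemma eqv_well_typed:
  "eqv t f g \<Longrightarrow> well_typed f \<and> well_typed g \<and> source f = source g \<and> target f = target g"
  by (induction rule: eqv.induct) (auto simp: hom_iff_well_typed)

text \<open>Expressions are identified when they are equal in NB_t for every t, and all ill-typed
  expressions form one junk class.\<close>
definition nb_equiv :: "'k::field nbmor \<Rightarrow> 'k nbmor \<Rightarrow> bool" where
  "nb_equiv f g \<longleftrightarrow> (\<forall>t. eqv t f g) \<or> (\<not> well_typed f \<and> \<not> well_typed g)"

lemma nb_equivI:
  "(well_typed f \<Longrightarrow> (\<And>t. eqv t f g)) \<Longrightarrow> (well_typed f \<longleftrightarrow> well_typed g) \<Longrightarrow>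
    nb_equiv f g"
  unfolding nb_equiv_def by blast

lemma nb_equivE:
  assumes "nb_equiv f g"
  obtains "well_typed f" "well_typed g" "source f = source g" "target f = target g"
    "\<And>t. eqv t f g"
  | "\<not> well_typed f" "\<not> well_typed g"
  using assms eqv_well_typed unfolding nb_equiv_def by metis

lemma equivp_nb_equiv: "equivp nb_equiv"
proof (rule equivpI)
  show "reflp nb_equiv"
    unfolding reflp_def nb_equiv_def using hom_iff_well_typed eqv.refl by blast
  show "symp nb_equiv"
    unfolding symp_def nb_equiv_def using eqv.sym by blast
  show "transp nb_equiv"
    unfolding transp_def by (auto elim!: nb_equivE intro: nb_equivI eqv.trans)
qed

quotient_type (overloaded) 'k mor = "'k::field nbmor" / nb_equiv
  by (rule equivp_nb_equiv)

lift_definition qId :: "nat \<Rightarrow> 'k::field mor" is Id .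
lift_definition qZr :: "nat \<Rightarrow> nat \<Rightarrow> 'k::field mor" is Zr .
lift_definition qX :: "'k::field mor" is Xg .
lift_definition qTau :: "'k::field mor" is Taug .
lift_definition qCap :: "'k::field mor" is Capg .
lift_definition qCup :: "'k::field mor" is Cupg .

lift_definition qwt :: "'k::field mor \<Rightarrow> bool" is well_typed
  by (auto elim: nb_equivE)
lift_definition qsrc :: "'k::field mor \<Rightarrow> nat" is "\<lambda>f. if well_typed f then source f else 0"
  by (auto elim: nb_equivE)
lift_definition qtgt :: "'k::field mor \<Rightarrow> nat" is "\<lambda>f. if well_typed f then target f else 0"
  by (auto elim: nb_equivE)

abbreviation qhom :: "'k::field mor \<Rightarrow> nat \<Rightarrow> nat \<Rightarrow> bool" where
  "qhom F n m \<equiv> qwt F \<and> qsrc F = n \<and> qtgt F = m"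

lemma qhom_abs_mor_iff: "qhom (abs_mor f :: 'k::field mor) n m \<longleftrightarrow> hom f n m"
  by (simp add: qwt.abs_eq qsrc.abs_eq qtgt.abs_eq hom_iff_well_typed)

lemma eqv_if_abs_mor_eq:
  "abs_mor f = (abs_mor g :: 'k::field mor) \<Longrightarrow> hom f n m \<Longrightarrow> eqv t f g"
  by (auto simp: mor.abs_eq_iff hom_iff_well_typed elim: nb_equivE)

instantiation mor :: (field) "{plus, times}"
begin
lift_definition plus_mor :: "'a mor \<Rightarrow> 'a mor \<Rightarrow> 'a mor" is Add
  by (auto elim!: nb_equivE intro!: nb_equivI eqv.cong_Add simp: hom_iff_well_typed)
lift_definition times_mor :: "'a mor \<Rightarrow> 'a mor \<Rightarrow> 'a mor" is Comp
  by (auto elim!: nb_equivE intro!: nb_equivI eqv.cong_Comp simp: hom_iff_well_typed)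
instance ..
end

lift_definition tens :: "'k::field mor \<Rightarrow> 'k mor \<Rightarrow> 'k mor" (infixr "\<otimes>" 80) is Tens
  by (auto elim!: nb_equivE intro!: nb_equivI eqv.cong_Tens)

lift_definition smul :: "'k::field \<Rightarrow> 'k mor \<Rightarrow> 'k mor" is Smul
  by (auto elim!: nb_equivE intro!: nb_equivI eqv.cong_Smul)

lemma qwt_simps [simp]:
  "qwt (qId n)" "qwt (qZr n m)" "qwt qX" "qwt qTau" "qwt qCap" "qwt qCup"
  "qwt (F * G) \<longleftrightarrow> qwt F \<and> qwt G \<and> qsrc F = qtgt G"
  "qwt (F \<otimes> G) \<longleftrightarrow> qwt F \<and> qwt G"
  "qwt (F + G) \<longleftrightarrow> qwt F \<and> qwt G \<and> qsrc F = qsrc G \<and> qtgt F = qtgt G"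
  "qwt (smul c F) \<longleftrightarrow> qwt F"
  by (transfer; auto)+

lemma qsrc_qtgt_simps [simp]:
  "qsrc (qId n) = n" "qsrc (qZr n m) = n" "qsrc qX = 1" "qsrc qTau = 2"
  "qsrc qCap = 2" "qsrc qCup = 0"
  "qtgt (qId n) = n" "qtgt (qZr n m) = m" "qtgt qX = 1" "qtgt qTau = 2"
  "qtgt qCap = 0" "qtgt qCup = 2"
  "qwt (F * G) \<Longrightarrow> qsrc (F * G) = qsrc G"
  "qwt (F * G) \<Longrightarrow> qtgt (F * G) = qtgt F"
  "qwt (F \<otimes> G) \<Longrightarrow> qsrc (F \<otimes> G) = qsrc F + qsrc G"
  "qwt (F \<otimes> G) \<Longrightarrow> qtgt (F \<otimes> G) = qtgt F + qtgt G"
  "qwt (F + G) \<Longrightarrow> qsrc (F + G) = qsrc F"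
  "qwt (F + G) \<Longrightarrow> qtgt (F + G) = qtgt F"
  "qsrc (smul c F) = qsrc F"
  "qtgt (smul c F) = qtgt F"
  by (transfer; auto)+

instance mor :: (field) semiring
proof
  fix F G H :: "'a mor"
  show "F * G * H = F * (G * H)"
    by transfer (auto intro!: nb_equivI eqv.comp_assoc simp: hom_iff_well_typed split: if_splits)
  show "F + G + H = F + (G + H)"
    by transfer (auto intro!: nb_equivI eqv.add_assoc simp: hom_iff_well_typed split: if_splits)
  show "F + G = G + F"
    by transfer (auto intro!: nb_equivI eqv.add_comm simp: hom_iff_well_typed split: if_splits)
  show "(F + G) * H = F * H + G * H"
    by transfer (auto intro!: nb_equivI eqv.comp_add_l simp: hom_iff_well_typed split: if_splits)
  show "H * (F + G) = H * F + H * G"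
    by transfer (auto intro!: nb_equivI eqv.comp_add_r simp: hom_iff_well_typed split: if_splits)
qed

lemma qtens_assoc: "(F \<otimes> G) \<otimes> H = F \<otimes> (G \<otimes> (H :: 'k::field mor))"
  by transfer (auto intro!: nb_equivI eqv.tens_assoc simp: hom_iff_well_typed split: if_splits)

lemma qtens_add_left: "(F + G) \<otimes> H = F \<otimes> H + G \<otimes> (H :: 'k::field mor)"
  by transfer (auto intro!: nb_equivI eqv.tens_add_l simp: hom_iff_well_typed split: if_splits)

lemma qtens_add_right: "H \<otimes> (F + G) = H \<otimes> F + H \<otimes> (G :: 'k::field mor)"
  by transfer (auto intro!: nb_equivI eqv.tens_add_r simp: hom_iff_well_typed split: if_splits)

lemma qsmul_one: "smul 1 F = (F :: 'k::field mor)"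
  by transfer (auto intro!: nb_equivI eqv.smul_one simp: hom_iff_well_typed split: if_splits)

lemma qsmul_smul: "smul a (smul b F) = smul (a * b) (F :: 'k::field mor)"
  by transfer (auto intro!: nb_equivI eqv.smul_smul simp: hom_iff_well_typed split: if_splits)

lemma qcomp_smul_left: "smul c F * G = smul c (F * (G :: 'k::field mor))"
  by transfer (auto intro!: nb_equivI eqv.comp_smul_l simp: hom_iff_well_typed split: if_splits)

lemma qcomp_smul_right: "F * smul c G = smul c (F * (G :: 'k::field mor))"
  by transfer (auto intro!: nb_equivI eqv.comp_smul_r simp: hom_iff_well_typed split: if_splits)

lemma qtens_smul_left: "smul c F \<otimes> G = smul c (F \<otimes> (G :: 'k::field mor))"
  by transfer (auto intro!: nb_equivI eqv.tens_smul_l simp: hom_iff_well_typed split: if_splits)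

lemma qtens_smul_right: "F \<otimes> smul c G = smul c (F \<otimes> (G :: 'k::field mor))"
  by transfer (auto intro!: nb_equivI eqv.tens_smul_r simp: hom_iff_well_typed split: if_splits)

lemma qtens_id [simp]: "qId m \<otimes> qId n = (qId (m + n) :: 'k::field mor)"
  by transfer (auto intro!: nb_equivI eqv.tens_id simp: hom_iff_well_typed split: if_splits)

lemma qcomp_id_left [simp]: "qwt F \<Longrightarrow> qtgt F = m \<Longrightarrow> qId m * F = (F :: 'k::field mor)"
  by transfer (auto intro!: nb_equivI eqv.comp_id_l simp: hom_iff_well_typed split: if_splits)

lemma qcomp_id_right [simp]: "qwt F \<Longrightarrow> qsrc F = n \<Longrightarrow> F * qId n = (F :: 'k::field mor)"
  by transfer (auto intro!: nb_equivI eqv.comp_id_r simp: hom_iff_well_typed split: if_splits)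

lemma qtens_unit_left [simp]: "qwt F \<Longrightarrow> qId 0 \<otimes> F = (F :: 'k::field mor)"
  by transfer (auto intro!: nb_equivI eqv.tens_unit_l simp: hom_iff_well_typed split: if_splits)

lemma qtens_unit_right [simp]: "qwt F \<Longrightarrow> F \<otimes> qId 0 = (F :: 'k::field mor)"
  by transfer (auto intro!: nb_equivI eqv.tens_unit_r simp: hom_iff_well_typed split: if_splits)

lemma qadd_zero: "qhom F n m \<Longrightarrow> F + qZr n m = (F :: 'k::field mor)"
  by transfer (auto intro!: nb_equivI eqv.add_zero simp: hom_iff_well_typed split: if_splits)

lemma qadd_neg: "qhom F n m \<Longrightarrow> F + smul (-1) F = (qZr n m :: 'k::field mor)"
  by transfer (auto intro!: nb_equivI eqv.add_inv simp: hom_iff_well_typed split: if_splits)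

lemma qinterchange:
  "qwt F \<Longrightarrow> qwt F' \<Longrightarrow> qwt G \<Longrightarrow> qwt G' \<Longrightarrow> qsrc F = qtgt F' \<Longrightarrow> qsrc G = qtgt G' \<Longrightarrow>
    (F \<otimes> G) * (F' \<otimes> G') = (F * F') \<otimes> (G * (G' :: 'k::field mor))"
  by transfer (auto intro!: nb_equivI eqv.interchange simp: hom_iff_well_typed split: if_splits)

lemma qzigzag1: "(qCap \<otimes> qId 1) * (qId 1 \<otimes> qCup) = (qId 1 :: 'k::field mor)"
  by transfer (auto intro!: nb_equivI eqv.rel_zigzag1)

lemma qzigzag2: "(qId 1 \<otimes> qCap) * (qCup \<otimes> qId 1) = (qId 1 :: 'k::field mor)"
  by transfer (auto intro!: nb_equivI eqv.rel_zigzag2)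

lemma qcap_tau_slide:
  "(qId 1 \<otimes> qCap) * (qTau \<otimes> qId 1) = (qCap \<otimes> qId 1) * (qId 1 \<otimes> (qTau :: 'k::field mor))"
  by transfer (auto intro!: nb_equivI eqv.rel_cap_tau_slide)

lemma qdot_slide: "(qX \<otimes> qId 1) * qTau + smul (-1) (qTau * (qId 1 \<otimes> qX)) =
    qId 1 \<otimes> qId 1 + smul (-1) (qCup * (qCap :: 'k::field mor))"
  by transfer (auto intro!: nb_equivI eqv.rel_dot_slide)

lemma qcap_dot: "qCap * (qId 1 \<otimes> qX) = smul (-1) (qCap * (qX \<otimes> (qId 1 :: 'k::field mor)))"
  by transfer (auto intro!: nb_equivI eqv.rel_cap_dot)

lemma qcomp_zero_right [simp]:
  assumes "qwt F" "qsrc F = m"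
  shows "F * qZr n m = (qZr n (qtgt F) :: 'k::field mor)"
proof -
  have "F * qZr n m = F * (qZr n m + smul (-1) (qZr n m))" by (simp add: qadd_neg)
  also have "\<dots> = F * qZr n m + smul (-1) (F * qZr n m)"
    by (simp add: distrib_left qcomp_smul_right)
  also have "\<dots> = qZr n (qtgt F)" using assms by (simp add: qadd_neg)
  finally show ?thesis .
qed

lemma qcomp_zero_left [simp]:
  assumes "qwt F" "qtgt F = n"
  shows "qZr n m * F = (qZr (qsrc F) m :: 'k::field mor)"
proof -
  have "qZr n m * F = (qZr n m + smul (-1) (qZr n m)) * F" by (simp add: qadd_neg)
  also have "\<dots> = qZr n m * F + smul (-1) (qZr n m * F)"
    by (simp add: distrib_right qcomp_smul_left)
  also have "\<dots> = qZr (qsrc F) m" using assms by (simp add: qadd_neg)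
  finally show ?thesis .
qed

lemma qtens_zero_left [simp]:
  assumes "qwt F"
  shows "qZr n m \<otimes> F = (qZr (n + qsrc F) (m + qtgt F) :: 'k::field mor)"
proof -
  have "qZr n m \<otimes> F = (qZr n m + smul (-1) (qZr n m)) \<otimes> F" by (simp add: qadd_neg)
  also have "\<dots> = qZr n m \<otimes> F + smul (-1) (qZr n m \<otimes> F)"
    by (simp add: qtens_add_left qtens_smul_left)
  also have "\<dots> = qZr (n + qsrc F) (m + qtgt F)" using assms by (simp add: qadd_neg)
  finally show ?thesis .
qed

lemma qtens_zero_right [simp]:
  assumes "qwt F"
  shows "F \<otimes> qZr n m = (qZr (qsrc F + n) (qtgt F + m) :: 'k::field mor)"
proof -
  have "F \<otimes> qZr n m = F \<otimes> (qZr n m + smul (-1) (qZr n m))" by (simp add: qadd_neg)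
  also have "\<dots> = F \<otimes> qZr n m + smul (-1) (F \<otimes> qZr n m)"
    by (simp add: qtens_add_right qtens_smul_right)
  also have "\<dots> = qZr (qsrc F + n) (qtgt F + m)" using assms by (simp add: qadd_neg)
  finally show ?thesis .
qed

lemma qzero_add [simp]:
  "qhom F n m \<Longrightarrow> qZr n m + F = (F :: 'k::field mor)"
  by (simp add: add.commute[of "qZr n m"] qadd_zero)

section \<open>Diagrammatic identities\<close>

lemma qtens_slide:
  "qwt F \<Longrightarrow> qwt G \<Longrightarrow>
    (F \<otimes> qId (qtgt G)) * (qId (qsrc F) \<otimes> G) =
      (qId (qtgt F) \<otimes> G) * (F \<otimes> (qId (qsrc G) :: 'k::field mor))"
  by (simp add: qinterchange)

lemma qcomp_tens_id:
  "qwt F \<Longrightarrow> qwt G \<Longrightarrow> qsrc F = qtgt G \<Longrightarrow>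
    (F * G) \<otimes> qId k = (F \<otimes> qId k) * (G \<otimes> (qId k :: 'k::field mor))"
  by (simp add: qinterchange)

lemma qid_tens_comp:
  "qwt F \<Longrightarrow> qwt G \<Longrightarrow> qsrc F = qtgt G \<Longrightarrow>
    qId k \<otimes> (F * G) = (qId k \<otimes> F) * (qId k \<otimes> (G :: 'k::field mor))"
  by (simp add: qinterchange)

abbreviation qX1 :: "'k::field mor" where "qX1 \<equiv> qX \<otimes> qId 1"
abbreviation qX2 :: "'k::field mor" where "qX2 \<equiv> qId 1 \<otimes> qX"

lemma qX1_qX2_commute: "qX1 * qX2 = (qX2 * qX1 :: 'k::field mor)"
  using qtens_slide[of qX qX] by simp

lemma qzigzag1_right: "(qId 1 \<otimes> qCap \<otimes> qId 1) * (qId 2 \<otimes> qCup) = (qId 2 :: 'k::field mor)"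
proof -
  have "(qId 1 \<otimes> qCap \<otimes> qId 1) * (qId 2 \<otimes> qCup) =
      (qId 1 \<otimes> qCap \<otimes> qId 1) * (qId 1 \<otimes> qId 1 \<otimes> (qCup :: 'k mor))"
    by (simp add: qtens_assoc[symmetric])
  also have "\<dots> = qId 1 \<otimes> ((qCap \<otimes> qId 1) * (qId 1 \<otimes> qCup))" by (simp add: qid_tens_comp)
  finally show ?thesis by (simp add: qzigzag1)
qed

lemma qzigzag1_left: "(qCap \<otimes> qId 2) * (qId 1 \<otimes> qCup \<otimes> qId 1) = (qId 2 :: 'k::field mor)"
proof -
  have "(qCap \<otimes> qId 2) * (qId 1 \<otimes> qCup \<otimes> qId 1) =
      ((qCap \<otimes> qId 1) \<otimes> qId 1) * ((qId 1 \<otimes> qCup) \<otimes> (qId 1 :: 'k mor))"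
    by (simp add: qtens_assoc)
  also have "\<dots> = ((qCap \<otimes> qId 1) * (qId 1 \<otimes> qCup)) \<otimes> qId 1" by (simp add: qcomp_tens_id)
  finally show ?thesis by (simp add: qzigzag1)
qed

text \<open>W : \<one> \<rightarrow> B \<star> B is recovered from the endomorphism of B obtained by bending its right
  output strand down.\<close>
lemma qcup_unbend:
  assumes "qhom W 0 2"
  shows "(((qId 1 \<otimes> qCap) * (W \<otimes> qId 1)) \<otimes> qId 1) * qCup = (W :: 'k::field mor)"
proof -
  have "(((qId 1 \<otimes> qCap) * (W \<otimes> qId 1)) \<otimes> qId 1) * qCup =
      (qId 1 \<otimes> qCap \<otimes> qId 1) * ((W \<otimes> qId 2) * qCup)"
    using assms by (simp add: qcomp_tens_id qtens_assoc mult.assoc)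
  also have "(W \<otimes> qId 2) * qCup = (qId 2 \<otimes> qCup) * W"
    using assms qtens_slide[of W qCup] by simp
  finally show ?thesis
    using assms by (simp add: mult.assoc[symmetric] qzigzag1_right)
qed

lemma qdot_cup_bent:
  "(qId 1 \<otimes> qCap) * ((qX2 * qCup) \<otimes> qId 1) = smul (-1) (qX :: 'k::field mor)"
proof -
  have "(qId 1 \<otimes> qCap) * ((qX2 * qCup) \<otimes> qId 1) =
      ((qId 1 \<otimes> qCap) * (qId 1 \<otimes> qX \<otimes> qId 1)) * (qCup \<otimes> (qId 1 :: 'k mor))"
    by (simp add: qcomp_tens_id qtens_assoc mult.assoc)
  also have "(qId 1 \<otimes> qCap) * (qId 1 \<otimes> qX \<otimes> qId 1) =
      qId 1 \<otimes> (qCap * (qX \<otimes> (qId 1 :: 'k mor)))"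
    by (simp add: qid_tens_comp)
  also have "\<dots> = smul (-1) (qId 1 \<otimes> (qCap * qX2))"
    by (simp add: qcap_dot qtens_smul_right qsmul_smul qsmul_one)
  also have "qId 1 \<otimes> (qCap * qX2) = (qId 1 \<otimes> qCap) * (qId 2 \<otimes> (qX :: 'k mor))"
    by (simp add: qid_tens_comp qtens_assoc[symmetric])
  also have "smul (-1) \<dots> * (qCup \<otimes> qId 1) =
      smul (-1) ((qId 1 \<otimes> qCap) * ((qId 2 \<otimes> qX) * (qCup \<otimes> qId 1)))"
    by (simp add: qcomp_smul_left mult.assoc)
  also have "(qId 2 \<otimes> qX) * (qCup \<otimes> qId 1) = (qCup \<otimes> qId 1) * (qX :: 'k mor)"
    using qtens_slide[of qCup "qX :: 'k mor"] by simp
  finally show ?thesis by (simp add: qzigzag2 mult.assoc[symmetric])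
qed

lemma qdot_cup: "qX1 * qCup = smul (-1) (qX2 * (qCup :: 'k::field mor))"
proof -
  have "smul (-1) (qX1 * qCup) = qX2 * (qCup :: 'k mor)"
    using qcup_unbend[of "qX2 * qCup"] by (simp add: qdot_cup_bent qtens_smul_left qcomp_smul_left)
  then have "smul (-1) (smul (-1) (qX1 * qCup)) = smul (-1) (qX2 * (qCup :: 'k mor))" by simp
  then show ?thesis by (simp add: qsmul_smul qsmul_one)
qed

abbreviation qE :: "'k::field mor" where "qE \<equiv> qCup * qCap"

definition qbend :: "'k::field mor \<Rightarrow> 'k mor" where
  "qbend F = (F \<otimes> qId 1) * (qId 1 \<otimes> qCup)"

text \<open>Rotation of a diagram B \<star> B \<rightarrow> B \<star> B by a quarter turn. Applied to the dot-slide
  relation x_1 \<tau> - \<tau> x_2 = 1 - E it yields its mirror image \<tau> x_1 - x_2 \<tau> = 1 - E.\<close>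
definition qrotate :: "'k::field mor \<Rightarrow> 'k mor" where
  "qrotate F = (qCap \<otimes> qId 2) * (qId 1 \<otimes> qbend F)"

lemma qrotate_add: "qrotate (F + G) = qrotate F + qrotate G"
  unfolding qrotate_def qbend_def
  by (simp add: qtens_add_left qtens_add_right distrib_left distrib_right)

lemma qrotate_smul: "qrotate (smul c F) = smul c (qrotate F)"
  unfolding qrotate_def qbend_def
  by (simp add: qtens_smul_left qtens_smul_right qcomp_smul_left qcomp_smul_right)

lemma qbend_tau_typing [simp]: "qwt (qbend qTau)" "qsrc (qbend qTau) = 1" "qtgt (qbend qTau) = 3"
  unfolding qbend_def by simp_all

lemma qrotate_tau: "qrotate qTau = (qTau :: 'k::field mor)"
proof -
  have bend: "qId 1 \<otimes> qbend qTau = (qId 1 \<otimes> qTau \<otimes> qId 1) * (qId 2 \<otimes> (qCup :: 'k mor))"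
    unfolding qbend_def by (simp add: qid_tens_comp qtens_assoc[symmetric])
  have cap_slide: "(qCap \<otimes> qId 2) * (qId 1 \<otimes> qTau \<otimes> qId 1) =
      (qId 1 \<otimes> qCap \<otimes> qId 1) * (qTau \<otimes> (qId 2 :: 'k mor))"
  proof -
    have "(qCap \<otimes> qId 2) * (qId 1 \<otimes> qTau \<otimes> qId 1) =
        ((qCap \<otimes> qId 1) * (qId 1 \<otimes> qTau)) \<otimes> (qId 1 :: 'k mor)"
      by (simp add: qcomp_tens_id qtens_assoc)
    also have "\<dots> = ((qId 1 \<otimes> qCap) * (qTau \<otimes> qId 1)) \<otimes> qId 1"
      by (simp add: qcap_tau_slide)
    also have "\<dots> = (qId 1 \<otimes> qCap \<otimes> qId 1) * (qTau \<otimes> (qId 2 :: 'k mor))"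
      by (simp add: qcomp_tens_id qtens_assoc)
    finally show ?thesis .
  qed
  have cup_slide: "(qTau \<otimes> qId 2) * (qId 2 \<otimes> qCup) = (qId 2 \<otimes> qCup) * (qTau :: 'k mor)"
    using qtens_slide[of qTau "qCup :: 'k mor"] by simp
  have "qrotate qTau = ((qCap \<otimes> qId 2) * (qId 1 \<otimes> qTau \<otimes> qId 1)) * (qId 2 \<otimes> (qCup :: 'k mor))"
    unfolding qrotate_def bend by (simp add: mult.assoc)
  also have "\<dots> = ((qId 1 \<otimes> qCap \<otimes> qId 1) * (qId 2 \<otimes> qCup)) * qTau"
    unfolding cap_slide by (simp add: mult.assoc cup_slide)
  finally show ?thesis by (simp add: qzigzag1_right)
qed

lemma qrotate_id: "qrotate (qId 2) = (qE :: 'k::field mor)"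
proof -
  have "qrotate (qId 2) = (qCap \<otimes> qId 2) * (qId 2 \<otimes> (qCup :: 'k mor))"
    unfolding qrotate_def qbend_def by (simp add: qtens_assoc[symmetric])
  also have "\<dots> = qE"
    using qtens_slide[of qCap "qCup :: 'k mor"] by simp
  finally show ?thesis .
qed

lemma qrotate_E: "qrotate qE = (qId 2 :: 'k::field mor)"
proof -
  have "qbend qE = (qCup \<otimes> qId 1) * ((qCap \<otimes> qId 1) * (qId 1 \<otimes> (qCup :: 'k mor)))"
    unfolding qbend_def by (simp add: qcomp_tens_id mult.assoc)
  then have "qbend qE = (qCup \<otimes> qId 1 :: 'k mor)"
    by (simp add: qzigzag1)
  then show ?thesis
    unfolding qrotate_def by (simp add: qzigzag1_left)
qed

lemma qrotate_dot_tau: "qrotate (qX1 * qTau) = smul (-1) (qTau * (qX1 :: 'k::field mor))"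
proof -
  have bend: "qbend (qX1 * qTau) = (qX \<otimes> qId 2) * qbend (qTau :: 'k mor)"
    unfolding qbend_def by (simp add: qcomp_tens_id mult.assoc qtens_assoc)
  have cap_dot: "(qCap \<otimes> qId 2) * (qId 1 \<otimes> qX \<otimes> qId 2) =
      smul (-1) ((qCap \<otimes> qId 2) * (qX \<otimes> (qId 3 :: 'k mor)))"
  proof -
    have "(qCap \<otimes> qId 2) * (qId 1 \<otimes> qX \<otimes> qId 2) = (qCap * qX2) \<otimes> (qId 2 :: 'k mor)"
      by (simp add: qcomp_tens_id qtens_assoc)
    also have "\<dots> = smul (-1) ((qCap * qX1) \<otimes> qId 2)"
      by (simp add: qcap_dot qtens_smul_left)
    also have "\<dots> = smul (-1) ((qCap \<otimes> qId 2) * (qX \<otimes> (qId 3 :: 'k mor)))"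
      by (simp add: qcomp_tens_id qtens_assoc)
    finally show ?thesis .
  qed
  have dot_slide: "(qX \<otimes> qId 3) * (qId 1 \<otimes> qbend qTau) = (qId 1 \<otimes> qbend qTau) * (qX1 :: 'k mor)"
    using qtens_slide[of qX "qbend qTau :: 'k mor"] by simp
  have "qrotate (qX1 * qTau) =
      ((qCap \<otimes> qId 2) * (qId 1 \<otimes> qX \<otimes> qId 2)) * (qId 1 \<otimes> qbend (qTau :: 'k mor))"
    unfolding qrotate_def bend by (simp add: qid_tens_comp mult.assoc qbend_def)
  also have "\<dots> = smul (-1) ((qCap \<otimes> qId 2) * ((qX \<otimes> qId 3) * (qId 1 \<otimes> qbend qTau)))"
    unfolding cap_dot by (simp add: qcomp_smul_left mult.assoc)
  also have "\<dots> = smul (-1) (qrotate qTau * qX1)"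
    unfolding dot_slide qrotate_def by (simp add: mult.assoc)
  finally show ?thesis by (simp add: qrotate_tau)
qed

lemma qrotate_tau_dot: "qrotate (qTau * qX2) = smul (-1) (qX2 * (qTau :: 'k::field mor))"
proof -
  have dot_cup: "(qX2 \<otimes> qId 1) * (qId 1 \<otimes> qCup) =
      smul (-1) ((qId 2 \<otimes> qX) * (qId 1 \<otimes> (qCup :: 'k mor)))"
  proof -
    have "(qX2 \<otimes> qId 1) * (qId 1 \<otimes> qCup) = qId 1 \<otimes> (qX1 * (qCup :: 'k mor))"
      by (simp add: qid_tens_comp qtens_assoc)
    also have "\<dots> = smul (-1) (qId 1 \<otimes> (qX2 * qCup))"
      by (simp add: qdot_cup qtens_smul_right)
    also have "\<dots> = smul (-1) ((qId 2 \<otimes> qX) * (qId 1 \<otimes> (qCup :: 'k mor)))"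
      by (simp add: qid_tens_comp qtens_assoc[symmetric])
    finally show ?thesis .
  qed
  have tau_dot: "(qTau \<otimes> qId 1) * (qId 2 \<otimes> qX) = (qId 2 \<otimes> qX) * (qTau \<otimes> (qId 1 :: 'k mor))"
    using qtens_slide[of qTau "qX :: 'k mor"] by simp
  have bend: "qbend (qTau * qX2) = smul (-1) ((qId 2 \<otimes> qX) * qbend (qTau :: 'k mor))"
  proof -
    have "qbend (qTau * qX2) = (qTau \<otimes> qId 1) * ((qX2 \<otimes> qId 1) * (qId 1 \<otimes> (qCup :: 'k mor)))"
      unfolding qbend_def by (simp add: qcomp_tens_id mult.assoc)
    also have "\<dots> = smul (-1) (((qTau \<otimes> qId 1) * (qId 2 \<otimes> qX)) * (qId 1 \<otimes> (qCup :: 'k mor)))"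
      unfolding dot_cup by (simp add: qcomp_smul_right mult.assoc)
    also have "\<dots> = smul (-1) ((qId 2 \<otimes> qX) * qbend (qTau :: 'k mor))"
      unfolding tau_dot qbend_def by (simp add: mult.assoc)
    finally show ?thesis .
  qed
  have cap_dot: "(qCap \<otimes> qId 2) * (qId 3 \<otimes> qX) = qX2 * (qCap \<otimes> (qId 2 :: 'k mor))"
  proof -
    have "qId 3 \<otimes> qX = qId 2 \<otimes> (qX2 :: 'k mor)" by (simp add: qtens_assoc[symmetric])
    then show ?thesis using qtens_slide[of qCap "qX2 :: 'k mor"] by simp
  qed
  have "qId 1 \<otimes> qbend (qTau * qX2) = smul (-1) ((qId 3 \<otimes> qX) * (qId 1 \<otimes> qbend (qTau :: 'k mor)))"
    unfolding bend by (simp add: qtens_smul_right qid_tens_comp qtens_assoc[symmetric])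
  then have "qrotate (qTau * qX2) =
      smul (-1) (((qCap \<otimes> qId 2) * (qId 3 \<otimes> qX)) * (qId 1 \<otimes> qbend (qTau :: 'k mor)))"
    unfolding qrotate_def by (simp add: qcomp_smul_right mult.assoc)
  also have "\<dots> = smul (-1) (qX2 * qrotate qTau)"
    unfolding cap_dot qrotate_def by (simp add: mult.assoc)
  finally show ?thesis by (simp add: qrotate_tau)
qed

lemma qdot_slide_rotated:
  "smul (-1) (qTau * qX1) + qX2 * qTau = qE + smul (-1) (qId 2 :: 'k::field mor)"
proof -
  have "qrotate (qX1 * qTau + smul (-1) (qTau * qX2)) =
      qrotate (qId 1 \<otimes> qId 1 + smul (-1) (qE :: 'k mor))"
    by (rule arg_cong[OF qdot_slide])
  then show ?thesis
    by (simp add: qrotate_add qrotate_smul qrotate_dot_tau qrotate_tau_dot qrotate_id qrotate_E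
        qsmul_smul qsmul_one)
qed

typedef (overloaded) 'k endo2 = "{F :: 'k::field mor. qhom F 2 2}"
  by (rule exI[of _ "qId 2"]) simp

setup_lifting type_definition_endo2

text \<open>Only \<open>{ring, monoid_mult}\<close>: the class \<open>ring_1\<close> would also demand 0 \<noteq> 1, which is not
  available without a model of the category.\<close>
instantiation endo2 :: (field) "{ring, monoid_mult}"
begin
lift_definition zero_endo2 :: "'a endo2" is "qZr 2 2" by simp
lift_definition one_endo2 :: "'a endo2" is "qId 2" by simp
lift_definition plus_endo2 :: "'a endo2 \<Rightarrow> 'a endo2 \<Rightarrow> 'a endo2" is "(+)" by simp
lift_definition uminus_endo2 :: "'a endo2 \<Rightarrow> 'a endo2" is "smul (-1)" by simp
lift_definition minus_endo2 :: "'a endo2 \<Rightarrow> 'a endo2 \<Rightarrow> 'a endo2" is "\<lambda>F G. F + smul (-1) G"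
  by simp
lift_definition times_endo2 :: "'a endo2 \<Rightarrow> 'a endo2 \<Rightarrow> 'a endo2" is "(*)" by simp
instance
proof
  fix a b c :: "'a endo2"
  show "a + b + c = a + (b + c)" by transfer (rule add.assoc)
  show "a + b = b + a" by transfer (rule add.commute)
  show "0 + a = a" by transfer simp
  show "- a + a = 0" by transfer (simp add: add.commute[of "smul (-1) _"] qadd_neg)
  show "a - b = a + - b" by transfer simp
  show "a * b * c = a * (b * c)" by transfer (rule mult.assoc)
  show "(a + b) * c = a * c + b * c" by transfer (rule distrib_right)
  show "a * (b + c) = a * b + a * c" by transfer (rule distrib_left)
  show "1 * a = a" by transfer simp
  show "a * 1 = a" by transfer simp
qed
end

lift_definition e_x1 :: "'k::field endo2" is qX1 by simp
lift_definition e_x2 :: "'k::field endo2" is qX2 by simp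
lift_definition e_tau :: "'k::field endo2" is qTau by simp
lift_definition e_E :: "'k::field endo2" is qE by simp

lemma e_x1_x2_commute: "e_x1 * e_x2 = (e_x2 * e_x1 :: 'k::field endo2)"
  by transfer (rule qX1_qX2_commute)

lemma e_dot_slide: "e_x1 * e_tau - e_tau * e_x2 = (1 - e_E :: 'k::field endo2)"
  by transfer (use qdot_slide in simp)

lemma e_dot_slide_rotated: "e_tau * e_x1 - e_x2 * e_tau = (1 - e_E :: 'k::field endo2)"
proof -
  have "- (e_tau * e_x1) + e_x2 * e_tau = (e_E - 1 :: 'k endo2)"
    by transfer (rule qdot_slide_rotated)
  then show ?thesis by (simp add: algebra_simps)
qed

lemma e_E_dot: "e_E * e_x2 = - (e_E * e_x1 :: 'k::field endo2)"
  by transfer (simp add: mult.assoc qcap_dot qcomp_smul_right)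

lemma e_dot_E: "e_x2 * e_E = - (e_x1 * e_E :: 'k::field endo2)"
proof -
  have "e_x1 * e_E = - (e_x2 * e_E :: 'k endo2)"
    by transfer (simp add: mult.assoc[symmetric] qdot_cup qcomp_smul_left)
  then show ?thesis by simp
qed

fun qcpow :: "nat \<Rightarrow> 'k::field mor \<Rightarrow> nat \<Rightarrow> 'k mor" where
  "qcpow n F 0 = qId n"
| "qcpow n F (Suc k) = F * qcpow n F k"

lemma Rep_endo2_power: "Rep_endo2 (a ^ k) = qcpow 2 (Rep_endo2 a) k"
  by (induction k) (simp_all add: one_endo2.rep_eq times_endo2.rep_eq)

lemma qtau_commutes_odd_power_sum:
  assumes "odd r"
  shows "(qcpow 2 qX1 r + qcpow 2 qX2 r) * qTau =
    qTau * (qcpow 2 qX1 r + qcpow 2 qX2 r :: 'k::field mor)"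
proof -
  have "(e_x1 ^ r + e_x2 ^ r) * e_tau = e_tau * (e_x1 ^ r + e_x2 ^ r :: 'k endo2)"
    by (rule odd_power_sum_commutes[OF e_x1_x2_commute e_dot_slide e_dot_slide_rotated
          e_E_dot e_dot_E assms])
  then have "Rep_endo2 ((e_x1 ^ r + e_x2 ^ r) * e_tau) =
      Rep_endo2 (e_tau * (e_x1 ^ r + e_x2 ^ r :: 'k endo2))"
    by simp
  then show ?thesis
    by (simp add: Rep_endo2_power times_endo2.rep_eq plus_endo2.rep_eq
        e_x1.rep_eq e_x2.rep_eq e_tau.rep_eq)
qed

section \<open>Power sums\<close>

definition qxvar :: "nat \<Rightarrow> nat \<Rightarrow> 'k::field mor" where
  "qxvar n i = qId (i - 1) \<otimes> qX \<otimes> qId (n - i)"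

fun qpsum_part :: "nat \<Rightarrow> nat \<Rightarrow> nat \<Rightarrow> 'k::field mor" where
  "qpsum_part r n 0 = qZr n n"
| "qpsum_part r n (Suc k) = qpsum_part r n k + qcpow n (qxvar n (Suc k)) r"

definition qpsum :: "nat \<Rightarrow> nat \<Rightarrow> 'k::field mor" where
  "qpsum r n = qpsum_part r n n"

lemma abs_mor_cpow: "abs_mor (cpow n f r) = qcpow n (abs_mor f :: 'k::field mor) r"
  by (induction r) (simp_all add: qId.abs_eq times_mor.abs_eq[symmetric])

lemma abs_mor_psum: "abs_mor (psum r n) = (qpsum r n :: 'k::field mor)"
proof -
  have "abs_mor (psum_part r n k) = (qpsum_part r n k :: 'k mor)" for k
    by (induction k)
      (simp_all add: qZr.abs_eq plus_mor.abs_eq[symmetric] abs_mor_cpow xvar_def qxvar_def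
        qId.abs_eq qX.abs_eq tens.abs_eq)
  then show ?thesis by (simp add: psum_def qpsum_def)
qed

lemma qcpow_typing: "qhom F n n \<Longrightarrow> qhom (qcpow n F k) n n"
  by (induction k) auto

lemma qpsum_part_typing: "k \<le> n \<Longrightarrow> qhom (qpsum_part r n k :: 'k::field mor) n n"
proof (induction k)
  case (Suc k)
  then have "qhom (qcpow n (qxvar n (Suc k)) r :: 'k mor) n n"
    by (intro qcpow_typing) (simp add: qxvar_def)
  then show ?case using Suc by auto
qed simp

lemma qpsum_typing [simp]:
  "qwt (qpsum r n :: 'k::field mor)" "qsrc (qpsum r n :: 'k mor) = n" "qtgt (qpsum r n :: 'k mor) = n"
  using qpsum_part_typing[of n n r] by (auto simp: qpsum_def)

lemma qcpow_tens_id: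
  "qhom F n n \<Longrightarrow> qcpow (n + k) (F \<otimes> qId k) j = qcpow n F j \<otimes> (qId k :: 'k::field mor)"
  by (induction j) (simp_all add: qinterchange qcpow_typing)

lemma qcpow_id_tens:
  "qhom F n n \<Longrightarrow> qcpow (k + n) (qId k \<otimes> F) j = qId k \<otimes> (qcpow n F j :: 'k::field mor)"
  by (induction j) (simp_all add: qinterchange qcpow_typing)

lemma qpsum_part_tens_id:
  "k \<le> a \<Longrightarrow> qpsum_part r (a + b) k = qpsum_part r a k \<otimes> (qId b :: 'k::field mor)"
proof (induction k)
  case (Suc k)
  have "qxvar (a + b) (Suc k) = qxvar a (Suc k) \<otimes> (qId b :: 'k mor)"
    using Suc.prems by (simp add: qxvar_def qtens_assoc)
  moreover have "qhom (qxvar a (Suc k) :: 'k mor) a a"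
    using Suc.prems by (simp add: qxvar_def)
  ultimately show ?case
    using Suc by (simp add: qcpow_tens_id qtens_add_left)
qed simp

lemma qpsum_part_tens:
  "j \<le> b \<Longrightarrow>
    qpsum_part r (a + b) (a + j) = qpsum r a \<otimes> qId b + qId a \<otimes> (qpsum_part r b j :: 'k::field mor)"
proof (induction j)
  case 0
  then show ?case
    using qpsum_part_tens_id[of a a r b] by (simp add: qpsum_def qadd_zero qpsum_part_typing)
next
  case (Suc j)
  have "qxvar (a + b) (a + Suc j) = qId a \<otimes> (qxvar b (Suc j) :: 'k mor)"
  proof -
    have "a + Suc j - 1 = a + j" "a + b - (a + Suc j) = b - Suc j" by simp_all
    then show ?thesis by (simp add: qxvar_def qtens_assoc[symmetric])
  qed
  moreover have "qhom (qxvar b (Suc j) :: 'k mor) b b"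
    using Suc.prems by (simp add: qxvar_def)
  ultimately show ?case
    using Suc by (simp add: qcpow_id_tens qtens_add_right add.assoc)
qed

lemma qpsum_tens: "qpsum r (a + b) = qpsum r a \<otimes> qId b + qId a \<otimes> (qpsum r b :: 'k::field mor)"
  using qpsum_part_tens[of b b r a] by (simp add: qpsum_def)

lemma qcpow_commute:
  assumes "qhom F n n" "qhom G n n" "F * G = G * F"
  shows "qcpow n F k * G = G * (qcpow n F k :: 'k::field mor)"
proof (induction k)
  case (Suc k)
  have "qcpow n F (Suc k) * G = F * (qcpow n F k * G)" by (simp add: mult.assoc)
  also have "\<dots> = (F * G) * qcpow n F k" using Suc by (simp add: mult.assoc)
  finally show ?case using assms(3) by (simp add: mult.assoc)
qed (use assms in simp)

lemma qpsum_0: "qpsum r 0 = (qZr 0 0 :: 'k::field mor)"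
  by (simp add: qpsum_def)

lemma qpsum_1: "qpsum r 1 = (qcpow 1 qX r :: 'k::field mor)"
  using qcpow_typing[of "qX :: 'k mor" 1 r] by (simp add: qpsum_def qxvar_def One_nat_def)

lemma qpsum_2: "qpsum r 2 = qcpow 2 qX1 r + (qcpow 2 qX2 r :: 'k::field mor)"
  using qcpow_typing[of "qX1 :: 'k mor" 2 r]
  by (simp add: qpsum_def qxvar_def numeral_2_eq_2 One_nat_def)

lemma qcap_dot_power:
  "qCap * qcpow 2 qX2 k = smul ((-1) ^ k) (qCap * (qcpow 2 qX1 k :: 'k::field mor))"
proof (induction k)
  case (Suc k)
  have "qcpow 2 qX2 k * qX1 = qX1 * (qcpow 2 qX2 k :: 'k mor)"
    by (rule qcpow_commute) (auto simp: qX1_qX2_commute)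
  then have "qCap * qcpow 2 qX2 (Suc k) = smul (-1) ((qCap * qcpow 2 qX2 k) * (qX1 :: 'k mor))"
    by (simp add: mult.assoc[symmetric] qcap_dot qcomp_smul_left) (simp add: mult.assoc)
  also have "\<dots> = smul ((-1) ^ Suc k) (qCap * (qcpow 2 qX1 k * qX1))"
    by (simp add: Suc qcomp_smul_left qsmul_smul mult.assoc)
  also have "qcpow 2 qX1 k * qX1 = qX1 * (qcpow 2 qX1 k :: 'k mor)"
    by (rule qcpow_commute) auto
  finally show ?case by simp
qed (simp add: qsmul_one)

lemma qdot_power_cup:
  "qcpow 2 qX1 k * qCup = smul ((-1) ^ k) (qcpow 2 qX2 k * (qCup :: 'k::field mor))"
proof (induction k)
  case (Suc k)
  have "qcpow 2 qX2 k * qX1 = qX1 * (qcpow 2 qX2 k :: 'k mor)"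
    by (rule qcpow_commute) (auto simp: qX1_qX2_commute)
  then have "qcpow 2 qX1 (Suc k) * qCup = smul ((-1) ^ k) (qcpow 2 qX2 k * (qX1 * (qCup :: 'k mor)))"
    by (simp add: mult.assoc Suc qcomp_smul_right) (simp add: mult.assoc[symmetric])
  also have "\<dots> = smul ((-1) ^ Suc k) ((qcpow 2 qX2 k * qX2) * qCup)"
    by (simp add: qdot_cup qcomp_smul_right qsmul_smul mult.assoc)
  also have "qcpow 2 qX2 k * qX2 = qX2 * (qcpow 2 qX2 k :: 'k mor)"
    by (rule qcpow_commute) auto
  finally show ?case by (simp add: mult.assoc)
qed (simp add: qsmul_one)

lemma qcap_psum: "odd r \<Longrightarrow> qCap * qpsum r 2 = (qZr 2 0 :: 'k::field mor)"
  using qcpow_typing[of "qX1 :: 'k mor" 2 r]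
  by (simp add: qpsum_2 distrib_left qcap_dot_power qadd_neg)

lemma qpsum_cup: "odd r \<Longrightarrow> qpsum r 2 * qCup = (qZr 0 2 :: 'k::field mor)"
  using qcpow_typing[of "qX2 :: 'k mor" 2 r]
  by (simp add: qpsum_2 distrib_right qdot_power_cup add.commute qadd_neg)

lemma qpsum_commutes_tens:
  assumes "qhom F n m" "qhom G n' m'"
    and "qpsum r m * F = F * qpsum r n" "qpsum r m' * G = G * qpsum r n'"
  shows "qpsum r (m + m') * (F \<otimes> G) = (F \<otimes> G) * (qpsum r (n + n') :: 'k::field mor)"
proof -
  have "qpsum r (m + m') * (F \<otimes> G) = (qpsum r m * F) \<otimes> G + F \<otimes> (qpsum r m' * G)"
    using assms(1,2) by (simp add: qpsum_tens distrib_right qinterchange)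
  also have "\<dots> = (F * qpsum r n) \<otimes> G + F \<otimes> (G * qpsum r n')"
    using assms(3,4) by simp
  also have "\<dots> = (F \<otimes> G) * qpsum r (n + n')"
    using assms(1,2) by (simp add: qpsum_tens distrib_left qinterchange)
  finally show ?thesis .
qed

lemma qpsum_commutes_hom:
  assumes "odd r"
  shows "hom f n m \<Longrightarrow> qpsum r m * abs_mor f = abs_mor f * (qpsum r n :: 'k::field mor)"
proof (induction rule: hom.induct)
  case (hom_Id n)
  then show ?case by (simp add: qId.abs_eq[symmetric])
next
  case (hom_Zr n m)
  then show ?case by (simp add: qZr.abs_eq[symmetric])
next
  case hom_X
  then show ?case by (simp add: qX.abs_eq[symmetric] qpsum_1 qcpow_commute)
next
  case hom_Tau
  then show ?case using assms by (simp add: qTau.abs_eq[symmetric] qpsum_2 qtau_commutes_odd_power_sum)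
next
  case hom_Cap
  then show ?case using assms by (simp add: qCap.abs_eq[symmetric] qcap_psum qpsum_0)
next
  case hom_Cup
  then show ?case using assms by (simp add: qCup.abs_eq[symmetric] qpsum_cup qpsum_0)
next
  case (hom_Comp f n m g k)
  then show ?case by (simp add: times_mor.abs_eq[symmetric] mult.assoc[symmetric]) (simp add: mult.assoc)
next
  case (hom_Tens f n m g n' m')
  then show ?case
    by (simp add: tens.abs_eq[symmetric] qpsum_commutes_tens qhom_abs_mor_iff)
next
  case (hom_Add f n m g)
  then show ?case by (simp add: plus_mor.abs_eq[symmetric] distrib_left distrib_right)
next
  case (hom_Smul f n m c)
  then show ?case by (simp add: smul.abs_eq[symmetric] qcomp_smul_left qcomp_smul_right)
qed

lemma hom_psum: "hom (psum r n :: 'k::field nbmor) n n"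
proof -
  have "qhom (abs_mor (psum r n) :: 'k mor) n n" by (simp add: abs_mor_psum)
  then show ?thesis by (rule qhom_abs_mor_iff[THEN iffD1])
qed

theorem corollary3p9:
  fixes t :: "'k::field" and r :: nat
  assumes "(2::'k) \<noteq> 0"
    and "t = 0 \<or> t = 1"
    and "odd r"
  shows "in_center t (\<lambda>n. (psum r n :: 'k nbmor))"
  unfolding in_center_def
proof (intro conjI allI impI)
  show "hom (psum r n :: 'k nbmor) n n" for n
    by (rule hom_psum)
next
  fix f :: "'k nbmor" and n m
  assume f: "hom f n m"
  have "abs_mor (Comp (psum r m) f) = abs_mor (Comp f (psum r n))"
    using qpsum_commutes_hom[OF assms(3) f] by (simp add: times_mor.abs_eq[symmetric] abs_mor_psum)
  then show "eqv t (Comp (psum r m) f) (Comp f (psum r n))"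
    using hom_Comp[OF hom_psum f] by (rule eqv_if_abs_mor_eq)
qed

end
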